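(* In the Setting, under (SA1)–(SA3), let $\mathcal I\in\wp_k[n]$, distinct $i,j\in\mathcal I$ and distinct $\alpha,\beta\in\mathcal I^{\mathtt C}$ be such that $Y(\mathcal I)^{ij}_{\alpha\beta}$ is a radical term. Then $0\notin\chi(\mathcal I\mid^{ij}_{\alpha\gamma})$ for every $\gamma\in\mathcal I^{\mathtt C}$ with $\gamma\ne\alpha$.
   Context: Setting. $d\ge1$, $1\le k\le n$; $\mathbf t=(t_1,\dots,t_d)$ indeterminates; $\Lambda:=\mathbb C[t_1^{\pm1},\dots,t_d^{\pm1}]$ (a UFD whose units are exactly the elements $c\,\mathbf t^{\mathbf e}:=c\prod_u t_u^{e_u}$, $c\in\mathbb C\setminus\{0\}$, $\mathbf e\in\mathbb Z^d$), $\mathbb F$ its fraction field, $\overline{\mathbb F}$ an algebraic closure. $[n]=\{1,\dots,n\}$, $\wp_k[n]$ the $k$-subsets of $[n]$. For $\mathcal I\in\wp_k[n]$: $\mathcal I^{\mathtt C}=[n]\setminus\mathcal I$; $\mathcal I^i_\alpha=(\mathcal I\setminus\{i\})\cup\{\alpha\}$ ($i\in\mathcal I,\alpha\notin\mathcal I$); $\mathcal I^{ij}_{\alpha\beta}=(\mathcal I\setminus\{i,j\})\cup\{\alpha,\beta\}$. $\mathbf L$ ($k\times n$) and $\mathbf R$ ($n\times k$) have entries in $\overline{\mathbb F}$; $\Delta_{\mathbf L}(\mathcal I)$, $\Delta_{\mathbf R}(\mathcal I)$ are the maximal minors on columns, resp. rows, $\mathcal I$; $h(\mathcal I):=\Delta_{\mathbf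 L}(\mathcal I)\Delta_{\mathbf R}(\mathcal I)$; $\mathfrak G:=\{\mathcal I:\Delta_{\mathbf L}(\mathcal I)\ne0\}$. (SA1) all $\Delta_{\mathbf R}(\mathcal I)\ne0$; (SA2) $h(\mathcal I)$ is a unit of $\Lambda$ for every $\mathcal I\in\mathfrak G$; (SA3) $\mathbf L$ has no zero column. $Y(\mathcal I)^{ij}_{\alpha\beta}:=-\mathrm{sign}[(i-\alpha)(i-\beta)(j-\alpha)(j-\beta)]\frac{\Delta_{\mathbf R}(\mathcal I^i_\alpha)\Delta_{\mathbf R}(\mathcal I^j_\beta)}{\Delta_{\mathbf R}(\mathcal I^i_\beta)\Delta_{\mathbf R}(\mathcal I^j_\alpha)}$. The multiset $\chi(\mathcal I\mid^{ij}_{\alpha\beta}):=\{h(\mathcal I)h(\mathcal I^{ij}_{\alpha\beta}),\,h(\mathcal I^i_\alpha)h(\mathcal I^j_\beta),\,h(\mathcal I^i_\beta)h(\mathcal I^j_\alpha)\}$. $Y(\mathcal I)^{ij}_{\alpha\beta}$ is radical if $0\notin\chi(\mathcal I\mid^{ij}_{\alpha\beta})$ and $Y(\mathcal I)^{ij}_{\alpha\beta}\notin\mathbb F$. *)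

theory Defs
  imports "Jordan_Normal_Form.DL_Submatrix" "Jordan_Normal_Form.Determinant"
    "HOL-Computational_Algebra.Polynomial" "HOL-Library.Multiset"
begin

text \<open>Indices are 0-based: [n] = {0..<n}, variables t_u indexed by u in {0..<d}.
The field \<open>'a\<close> (algebraically closed) plays the role of the algebraic closure of
F = Frac(Lambda); \<open>iota\<close> embeds the complex numbers, \<open>t\<close> gives the indeterminates.\<close>

definition exps :: "nat \<Rightarrow> (nat \<Rightarrow> int) set" where
  "exps d = {e. \<forall>u. u \<ge> d \<longrightarrow> e u = 0}"

definition lmono :: "(nat \<Rightarrow> 'a::field) \<Rightarrow> nat \<Rightarrow> (nat \<Rightarrow> int) \<Rightarrow> 'a" where
  "lmono t d e = (\<Prod>u<d. t u powi e u)"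

text \<open>Laurent polynomial ring Lambda = C[t^(+-1)] inside the field.\<close>
definition Lam :: "(complex \<Rightarrow> 'a::field) \<Rightarrow> (nat \<Rightarrow> 'a) \<Rightarrow> nat \<Rightarrow> 'a set" where
  "Lam \<iota> t d = {\<Sum>e\<in>S. \<iota> (c e) * lmono t d e | S c. finite S \<and> S \<subseteq> exps d}"

definition Lam_units :: "(complex \<Rightarrow> 'a::field) \<Rightarrow> (nat \<Rightarrow> 'a) \<Rightarrow> nat \<Rightarrow> 'a set" where
  "Lam_units \<iota> t d = {x \<in> Lam \<iota> t d. \<exists>y \<in> Lam \<iota> t d. x * y = 1}"

definition FracF :: "(complex \<Rightarrow> 'a::field) \<Rightarrow> (nat \<Rightarrow> 'a) \<Rightarrow> nat \<Rightarrow> 'a set" where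
  "FracF \<iota> t d = {a / b | a b. a \<in> Lam \<iota> t d \<and> b \<in> Lam \<iota> t d \<and> b \<noteq> 0}"

text \<open>The setting: iota is a ring embedding of C, the t_u are nonzero and algebraically
independent over C (distinct Laurent monomials are linearly independent), and the ambient
algebraically closed field is algebraic over F, i.e. it is an algebraic closure of F.\<close>
definition setting :: "(complex \<Rightarrow> 'a::field) \<Rightarrow> (nat \<Rightarrow> 'a) \<Rightarrow> nat \<Rightarrow> bool" where
  "setting \<iota> t d \<longleftrightarrow>
     (\<forall>a b. \<iota> (a + b) = \<iota> a + \<iota> b) \<and> (\<forall>a b. \<iota> (a * b) = \<iota> a * \<iota> b) \<and> \<iota> 1 = 1 \<and>
     (\<forall>u<d. t u \<noteq> 0) \<and>
     (\<forall>S c. finite S \<and> S \<subseteq> exps d \<and> (\<Sum>e\<in>S. \<iota> (c e) * lmono t d e) = 0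
            \<longrightarrow> (\<forall>e\<in>S. c e = 0)) \<and>
     (\<forall>x. \<exists>p. p \<noteq> 0 \<and> (\<forall>i. coeff p i \<in> FracF \<iota> t d) \<and> poly p x = 0)"

definition ksubsets :: "nat \<Rightarrow> nat \<Rightarrow> nat set set" where
  "ksubsets k n = {I. I \<subseteq> {0..<n} \<and> card I = k}"

definition compl :: "nat \<Rightarrow> nat set \<Rightarrow> nat set" where
  "compl n I = {0..<n} - I"

definition swap1 :: "nat set \<Rightarrow> nat \<Rightarrow> nat \<Rightarrow> nat set" where
  "swap1 I i \<alpha> = insert \<alpha> (I - {i})"

definition swap2 :: "nat set \<Rightarrow> nat \<Rightarrow> nat \<Rightarrow> nat \<Rightarrow> nat \<Rightarrow> nat set" where
  "swap2 I i j \<alpha> \<beta> = (I - {i, j}) \<union> {\<alpha>, \<beta>}"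

definition DeltaL :: "'a::comm_ring_1 mat \<Rightarrow> nat set \<Rightarrow> 'a" where
  "DeltaL L I = det (submatrix L {0..<dim_row L} I)"

definition DeltaR :: "'a::comm_ring_1 mat \<Rightarrow> nat set \<Rightarrow> 'a" where
  "DeltaR R I = det (submatrix R I {0..<dim_col R})"

definition hh :: "'a::comm_ring_1 mat \<Rightarrow> 'a mat \<Rightarrow> nat set \<Rightarrow> 'a" where
  "hh L R I = DeltaL L I * DeltaR R I"

definition GG :: "'a::comm_ring_1 mat \<Rightarrow> nat \<Rightarrow> nat \<Rightarrow> nat set set" where
  "GG L k n = {I \<in> ksubsets k n. DeltaL L I \<noteq> 0}"

definition Yterm :: "'a::field mat \<Rightarrow> nat set \<Rightarrow> nat \<Rightarrow> nat \<Rightarrow> nat \<Rightarrow> nat \<Rightarrow> 'a" where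
  "Yterm R I i j \<alpha> \<beta> =
     - of_int (sgn ((int i - int \<alpha>) * (int i - int \<beta>) * (int j - int \<alpha>) * (int j - int \<beta>)))
     * (DeltaR R (swap1 I i \<alpha>) * DeltaR R (swap1 I j \<beta>))
     / (DeltaR R (swap1 I i \<beta>) * DeltaR R (swap1 I j \<alpha>))"

definition chi :: "'a::comm_ring_1 mat \<Rightarrow> 'a mat \<Rightarrow> nat set \<Rightarrow> nat \<Rightarrow> nat \<Rightarrow> nat \<Rightarrow> nat \<Rightarrow> 'a multiset" where
  "chi L R I i j \<alpha> \<beta> =
     {# hh L R I * hh L R (swap2 I i j \<alpha> \<beta>),
        hh L R (swap1 I i \<alpha>) * hh L R (swap1 I j \<beta>),
        hh L R (swap1 I i \<beta>) * hh L R (swap1 I j \<alpha>) #}"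

definition radical :: "(complex \<Rightarrow> 'a::field) \<Rightarrow> (nat \<Rightarrow> 'a) \<Rightarrow> nat \<Rightarrow> 'a mat \<Rightarrow> 'a mat
    \<Rightarrow> nat set \<Rightarrow> nat \<Rightarrow> nat \<Rightarrow> nat \<Rightarrow> nat \<Rightarrow> bool" where
  "radical \<iota> t d L R I i j \<alpha> \<beta> \<longleftrightarrow>
     0 \<notin># chi L R I i j \<alpha> \<beta> \<and> Yterm R I i j \<alpha> \<beta> \<notin> FracF \<iota> t d"

end

theory Submission
  imports Defs
begin

text \<open>Put \<open>S = I - {i, j}\<close> and write \<open>P(x, y)\<close>, \<open>Q(x, y)\<close> for the maximal minors of \<open>L\<close> and
  \<open>R\<close> on \<open>S \<union> {x, y}\<close>. Both families satisfy the three-term Pluecker relations up to signs,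
  and by (SA2) \<open>P(x, y) Q(x, y)\<close> is a unit of \<open>\<Lambda>\<close> whenever \<open>P(x, y) \<noteq> 0\<close>, so monomial
  relations among the \<open>P\<close>'s become relations among the \<open>Q\<close>'s modulo \<open>F\<close>. If \<open>P(a, g) = 0\<close>,
  the Pluecker relation for \<open>P\<close> degenerates to a monomial one; this puts the cross ratios
  \<open>Q(a, b) Q(c, g) / (Q(a, c) Q(b, g))\<close> into \<open>F\<close>, and two of them together with two Pluecker
  relations for \<open>Q\<close> put the cross ratio of any four points \<open>a, b, c, e\<close> into \<open>F\<close>. Up to sign,
  \<open>Y(I)\<close> is the cross ratio of \<open>i, \<beta>, \<alpha>, j\<close>, which radicality keeps out of \<open>F\<close>; hence none of
  \<open>P(i, \<gamma>)\<close>, \<open>P(j, \<gamma>)\<close>, \<open>P(\<alpha>, \<gamma>)\<close> vanishes. When both \<open>P(i, \<gamma>)\<close> and \<open>P(j, \<gamma>)\<close> vanish,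
  Cramer's rule and (SA3) give \<open>s \<in> S\<close> with \<open>\<Delta>\<^sub>L(I - {s} \<union> {\<gamma>}) \<noteq> 0\<close>, and the argument runs
  over \<open>S - {s} \<union> {i}\<close> and \<open>S - {s} \<union> {j}\<close> instead.\<close>

section \<open>The Laurent polynomial ring and its fraction field\<close>

context
  fixes \<iota> :: "complex \<Rightarrow> 'a::field" and t :: "nat \<Rightarrow> 'a" and d :: nat
  assumes setting: "setting \<iota> t d"
begin

lemma iota_add: "\<iota> (a + b) = \<iota> a + \<iota> b"
  and iota_mult: "\<iota> (a * b) = \<iota> a * \<iota> b"
  and iota_one: "\<iota> 1 = 1"
  and t_nonzero: "u < d \<Longrightarrow> t u \<noteq> 0"
  using setting by (simp_all add: setting_def)

lemma iota_zero: "\<iota> 0 = 0"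
  using iota_add[of 0 0] by (metis add_cancel_right_right add_0)

lemma iota_uminus: "\<iota> (- a) = - \<iota> a"
  using iota_add[of a "- a"] by (simp add: iota_zero eq_neg_iff_add_eq_0 add.commute)

lemma iota_sum: "\<iota> (\<Sum>x\<in>A. f x) = (\<Sum>x\<in>A. \<iota> (f x))"
  by (induction A rule: infinite_finite_induct) (auto simp: iota_zero iota_add)

lemma lmono_add: "lmono t d (\<lambda>u. e u + f u) = lmono t d e * lmono t d f"
  unfolding lmono_def prod.distrib[symmetric]
  by (rule prod.cong) (simp_all add: power_int_add t_nonzero)

lemma LamI:
  "finite S \<Longrightarrow> S \<subseteq> exps d \<Longrightarrow> x = (\<Sum>e\<in>S. \<iota> (c e) * lmono t d e) \<Longrightarrow> x \<in> Lam \<iota> t d"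
  unfolding Lam_def by blast

lemma LamE:
  assumes "x \<in> Lam \<iota> t d"
  obtains S c where "finite S" "S \<subseteq> exps d" "x = (\<Sum>e\<in>S. \<iota> (c e) * lmono t d e)"
  using assms unfolding Lam_def by blast

lemma Lam_sum_extend:
  assumes "finite S'" "S \<subseteq> S'"
  shows "(\<Sum>e\<in>S. \<iota> (c e) * lmono t d e) = (\<Sum>e\<in>S'. \<iota> (if e \<in> S then c e else 0) * lmono t d e)"
  by (rule sum.mono_neutral_cong_left) (use assms in \<open>auto simp: iota_zero\<close>)

lemma zero_in_Lam: "0 \<in> Lam \<iota> t d"
  by (rule LamI[of "{}"]) simp_all

lemma one_in_Lam: "1 \<in> Lam \<iota> t d"
  by (rule LamI[of "{\<lambda>u. 0}" _ "\<lambda>_. 1"]) (auto simp: exps_def iota_one lmono_def)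

lemma Lam_add:
  assumes "x \<in> Lam \<iota> t d" "y \<in> Lam \<iota> t d"
  shows "x + y \<in> Lam \<iota> t d"
proof -
  obtain S c where S: "finite S" "S \<subseteq> exps d" "x = (\<Sum>e\<in>S. \<iota> (c e) * lmono t d e)"
    using assms(1) by (rule LamE)
  obtain S' c' where S': "finite S'" "S' \<subseteq> exps d" "y = (\<Sum>e\<in>S'. \<iota> (c' e) * lmono t d e)"
    using assms(2) by (rule LamE)
  let ?U = "S \<union> S'"
  have "x + y = (\<Sum>e\<in>?U. \<iota> ((if e \<in> S then c e else 0) + (if e \<in> S' then c' e else 0)) * lmono t d e)"
    using Lam_sum_extend[of ?U S c] Lam_sum_extend[of ?U S' c'] S S'
    by (simp add: sum.distrib[symmetric] iota_add algebra_simps)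
  then show ?thesis using S S' by (intro LamI[of ?U]) auto
qed

lemma Lam_uminus:
  assumes "x \<in> Lam \<iota> t d"
  shows "- x \<in> Lam \<iota> t d"
proof -
  obtain S c where S: "finite S" "S \<subseteq> exps d" "x = (\<Sum>e\<in>S. \<iota> (c e) * lmono t d e)"
    using assms by (rule LamE)
  then have "- x = (\<Sum>e\<in>S. \<iota> (- c e) * lmono t d e)" by (simp add: iota_uminus sum_negf)
  then show ?thesis using S by (intro LamI[of S]) auto
qed

lemma Lam_mult:
  assumes "x \<in> Lam \<iota> t d" "y \<in> Lam \<iota> t d"
  shows "x * y \<in> Lam \<iota> t d"
proof -
  obtain S c where S: "finite S" "S \<subseteq> exps d" "x = (\<Sum>e\<in>S. \<iota> (c e) * lmono t d e)"
    using assms(1) by (rule LamE)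
  obtain S' c' where S': "finite S'" "S' \<subseteq> exps d" "y = (\<Sum>e\<in>S'. \<iota> (c' e) * lmono t d e)"
    using assms(2) by (rule LamE)
  define g where "g p = (\<lambda>u. fst p u + snd p u)" for p :: "(nat \<Rightarrow> int) \<times> (nat \<Rightarrow> int)"
  define fibre where "fibre q = {p \<in> S \<times> S'. g p = q}" for q
  let ?U = "g ` (S \<times> S')"
  have fin: "finite (S \<times> S')" using S S' by auto
  have "x * y = (\<Sum>p\<in>S \<times> S'. \<iota> (c (fst p) * c' (snd p)) * lmono t d (g p))"
    unfolding S(3) S'(3) sum_product sum.cartesian_product g_def
    by (rule sum.cong) (auto simp: lmono_add iota_mult)
  also have "\<dots> = (\<Sum>q\<in>?U. \<Sum>p\<in>fibre q. \<iota> (c (fst p) * c' (snd p)) * lmono t d (g p))"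
    unfolding fibre_def by (rule sum.group[symmetric]) (use fin in auto)
  also have "\<dots> = (\<Sum>q\<in>?U. \<Sum>p\<in>fibre q. \<iota> (c (fst p) * c' (snd p)) * lmono t d q)"
    unfolding fibre_def by (auto intro!: sum.cong)
  also have "\<dots> = (\<Sum>q\<in>?U. \<iota> (\<Sum>p\<in>fibre q. c (fst p) * c' (snd p)) * lmono t d q)"
    by (simp add: iota_sum sum_distrib_right)
  finally show ?thesis
    using S S' fin by (intro LamI[of ?U]) (auto simp: exps_def g_def subset_iff)
qed

lemma Lam_subset_FracF: "x \<in> Lam \<iota> t d \<Longrightarrow> x \<in> FracF \<iota> t d"
  unfolding FracF_def using one_in_Lam by force

lemma Lam_units_FracF: "u \<in> Lam_units \<iota> t d \<Longrightarrow> u \<in> FracF \<iota> t d \<and> u \<noteq> 0"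
  unfolding Lam_units_def using Lam_subset_FracF by force

lemma zero_in_FracF: "0 \<in> FracF \<iota> t d"
  using Lam_subset_FracF zero_in_Lam .

lemma one_in_FracF: "1 \<in> FracF \<iota> t d"
  using Lam_subset_FracF one_in_Lam .

lemma FracFE:
  assumes "x \<in> FracF \<iota> t d"
  obtains a b where "a \<in> Lam \<iota> t d" "b \<in> Lam \<iota> t d" "b \<noteq> 0" "x = a / b"
  using assms unfolding FracF_def by blast

lemma FracFI: "a \<in> Lam \<iota> t d \<Longrightarrow> b \<in> Lam \<iota> t d \<Longrightarrow> b \<noteq> 0 \<Longrightarrow> a / b \<in> FracF \<iota> t d"
  unfolding FracF_def by blast

lemma FracF_add:
  assumes "x \<in> FracF \<iota> t d" "y \<in> FracF \<iota> t d"
  shows "x + y \<in> FracF \<iota> t d"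
proof -
  obtain a b where ab: "a \<in> Lam \<iota> t d" "b \<in> Lam \<iota> t d" "b \<noteq> 0" "x = a / b"
    using assms(1) by (rule FracFE)
  obtain a' b' where ab': "a' \<in> Lam \<iota> t d" "b' \<in> Lam \<iota> t d" "b' \<noteq> 0" "y = a' / b'"
    using assms(2) by (rule FracFE)
  have "x + y = (a * b' + a' * b) / (b * b')"
    using ab ab' by (simp add: field_simps)
  then show ?thesis
    using FracFI[of "a * b' + a' * b" "b * b'"] ab ab' by (simp add: Lam_add Lam_mult)
qed

lemma FracF_mult:
  assumes "x \<in> FracF \<iota> t d" "y \<in> FracF \<iota> t d"
  shows "x * y \<in> FracF \<iota> t d"
proof -
  obtain a b where ab: "a \<in> Lam \<iota> t d" "b \<in> Lam \<iota> t d" "b \<noteq> 0" "x = a / b"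
    using assms(1) by (rule FracFE)
  obtain a' b' where ab': "a' \<in> Lam \<iota> t d" "b' \<in> Lam \<iota> t d" "b' \<noteq> 0" "y = a' / b'"
    using assms(2) by (rule FracFE)
  then show ?thesis
    using FracFI[of "a * a'" "b * b'"] ab by (simp add: Lam_mult)
qed

lemma FracF_uminus:
  assumes "x \<in> FracF \<iota> t d"
  shows "- x \<in> FracF \<iota> t d"
proof -
  obtain a b where "a \<in> Lam \<iota> t d" "b \<in> Lam \<iota> t d" "b \<noteq> 0" "x = a / b"
    using assms by (rule FracFE)
  then show ?thesis using FracFI[of "- a" b] by (simp add: Lam_uminus)
qed

lemma FracF_inverse:
  assumes "x \<in> FracF \<iota> t d"
  shows "inverse x \<in> FracF \<iota> t d"
proof -
  obtain a b where "a \<in> Lam \<iota> t d" "b \<in> Lam \<iota> t d" "b \<noteq> 0" "x = a / b"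
    using assms by (rule FracFE)
  then show ?thesis using FracFI[of b a] zero_in_FracF by (cases "a = 0") simp_all
qed

lemma FracF_divide: "x \<in> FracF \<iota> t d \<Longrightarrow> y \<in> FracF \<iota> t d \<Longrightarrow> x / y \<in> FracF \<iota> t d"
  by (simp add: divide_inverse FracF_mult FracF_inverse)

lemma FracF_diff: "x \<in> FracF \<iota> t d \<Longrightarrow> y \<in> FracF \<iota> t d \<Longrightarrow> x - y \<in> FracF \<iota> t d"
  by (metis FracF_add FracF_uminus diff_conv_add_uminus)

lemma FracF_sign: "s \<in> {1, -1} \<Longrightarrow> s \<in> FracF \<iota> t d"
  using one_in_FracF FracF_uminus by auto

lemma FracF_of_int: "of_int z \<in> FracF \<iota> t d"
proof -
  have of_nat: "of_nat m \<in> FracF \<iota> t d" for m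
    by (induction m) (auto simp: zero_in_FracF one_in_FracF FracF_add)
  show ?thesis
  proof (cases "z \<ge> 0")
    case True
    then show ?thesis using of_nat[of "nat z"] by simp
  next
    case False
    then show ?thesis using FracF_uminus[OF of_nat[of "nat (- z)"]] by simp
  qed
qed

end

section \<open>Maximal minors and Pluecker relations\<close>

lemma adj_mat_mult_vec_nth:
  assumes A: "A \<in> carrier_mat m m" and z: "z \<in> carrier_vec m" and c: "c < m"
  shows "(adj_mat A *\<^sub>v z) $ c = det (replace_col A z c)"
proof -
  have Az: "replace_col A z c \<in> carrier_mat m m" using A by (auto simp: replace_col_def)
  have "(adj_mat A *\<^sub>v z) $ c = row (adj_mat A) c \<bullet> z" using adj_mat[OF A] z c by auto
  also have "\<dots> = det (replace_col A z c)" unfolding scalar_prod_def using z c A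
    by (subst laplace_expansion_column[OF Az c], auto intro!: sum.cong arg_cong[of _ _ det]
      arg_cong[of _ _ "\<lambda> x. _ * x"] eq_matI
      simp: replace_col_def adj_mat_def Matrix.row_def cofactor_def mat_delete_def ac_simps)
  finally show ?thesis .
qed

lemma det_smult_vec_eq_mult_adj:
  assumes A: "A \<in> carrier_mat m m" and z: "z \<in> carrier_vec m"
  shows "det A \<cdot>\<^sub>v z = A *\<^sub>v (adj_mat A *\<^sub>v z)"
proof -
  have "det A \<cdot>\<^sub>v z = (det A \<cdot>\<^sub>m 1\<^sub>m m) *\<^sub>v z" using A z by auto
  also have "\<dots> = A *\<^sub>v (adj_mat A *\<^sub>v z)" using adj_mat[OF A] A z
    by (metis assoc_mult_mat_vec)
  finally show ?thesis .
qed

lemma det_replace_col_cofactor: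
  assumes B: "B \<in> carrier_mat m m" and v: "v \<in> carrier_vec m" and q: "q < m"
  shows "det (replace_col B v q) = (\<Sum>r<m. v $ r * cofactor B r q)"
proof -
  have Bv: "replace_col B v q \<in> carrier_mat m m" using B by (auto simp: replace_col_def)
  have "mat_delete (replace_col B v q) r q = mat_delete B r q" for r
    using B q by (auto intro!: eq_matI simp: mat_delete_def replace_col_def)
  then show ?thesis
    unfolding laplace_expansion_column[OF Bv q]
    using B q v by (intro sum.cong) (auto simp: replace_col_def cofactor_def)
qed

text \<open>Expanding \<open>det A \<cdot> z = A (adj A z)\<close> in the column \<open>q\<close> of \<open>B\<close>: only the columns \<open>p\<close> and
  \<open>q\<close> of \<open>A\<close> survive, because every other column of \<open>A\<close> already occurs in \<open>B\<close>.\<close>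
lemma det_replace_two_cols:
  fixes A :: "'a::comm_ring_1 mat"
  assumes A: "A \<in> carrier_mat m m" and y: "y \<in> carrier_vec m" and z: "z \<in> carrier_vec m"
    and p: "p < m" and q: "q < m" and pq: "p \<noteq> q"
  defines "B \<equiv> replace_col A y p"
  shows "det A * det (replace_col B z q) =
     det (replace_col A z p) * det (replace_col B (col A p) q)
   + det (replace_col A z q) * det (replace_col B (col A q) q)"
proof -
  have B: "B \<in> carrier_mat m m" using A by (auto simp: B_def replace_col_def)
  define w where "w = adj_mat A *\<^sub>v z"
  define \<phi> where "\<phi> v = det (replace_col B v q)" for v
  have \<phi>: "\<phi> v = (\<Sum>r<m. v $ r * cofactor B r q)" if "v \<in> carrier_vec m" for v
    unfolding \<phi>_def by (rule det_replace_col_cofactor[OF B that q])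
  have w: "w \<in> carrier_vec m" using A z adj_mat[OF A] unfolding w_def by auto
  have Aw: "(A *\<^sub>v w) $ r = (\<Sum>c<m. A $$ (r, c) * w $ c)" if "r < m" for r
    using that A w by (auto simp: scalar_prod_def atLeast0LessThan intro!: sum.cong)
  have Aw_z: "(A *\<^sub>v w) $ r = det A * z $ r" if "r < m" for r
    using det_smult_vec_eq_mult_adj[OF A z] that z unfolding w_def
    by (metis index_smult_vec(1) carrier_vecD)
  have "det A * \<phi> z = (\<Sum>r<m. (A *\<^sub>v w) $ r * cofactor B r q)"
    by (simp add: \<phi>[OF z] sum_distrib_left Aw_z mult.assoc)
  also have "\<dots> = (\<Sum>r<m. \<Sum>c<m. A $$ (r, c) * w $ c * cofactor B r q)"
    by (simp add: Aw sum_distrib_right)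
  also have "\<dots> = (\<Sum>c<m. \<Sum>r<m. A $$ (r, c) * w $ c * cofactor B r q)"
    by (rule sum.swap)
  also have "\<dots> = (\<Sum>c<m. w $ c * \<phi> (col A c))"
    using A by (auto simp: \<phi> sum_distrib_left ac_simps intro!: sum.cong)
  also have "\<dots> = (\<Sum>c\<in>{p,q}. w $ c * \<phi> (col A c))"
  proof (rule sum.mono_neutral_right)
    show "\<forall>c\<in>{..<m} - {p, q}. w $ c * \<phi> (col A c) = 0"
    proof
      fix c assume "c \<in> {..<m} - {p, q}"
      then have "\<phi> (col A c) = 0"
        unfolding \<phi>_def
        by (intro det_identical_columns[of _ m c q])
           (use A q in \<open>auto simp: replace_col_def B_def intro!: eq_vecI\<close>)
      then show "w $ c * \<phi> (col A c) = 0" by simp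
    qed
  qed (use p q in auto)
  finally show ?thesis
    unfolding w_def \<phi>_def using pq adj_mat_mult_vec_nth[OF A z p] adj_mat_mult_vec_nth[OF A z q] by simp
qed

definition cols_mat :: "'a mat \<Rightarrow> (nat \<Rightarrow> nat) \<Rightarrow> nat \<Rightarrow> 'a mat" where
  "cols_mat M g m = mat (dim_row M) m (\<lambda>(r, c). M $$ (r, g c))"

lemma cols_mat_carrier: "M \<in> carrier_mat k n \<Longrightarrow> cols_mat M g m \<in> carrier_mat k m"
  by (simp add: cols_mat_def)

lemma replace_col_cols_mat:
  "M \<in> carrier_mat k n \<Longrightarrow> c < m \<Longrightarrow> replace_col (cols_mat M g m) (col M u) c = cols_mat M (g(c := u)) m"
  by (auto intro!: eq_matI simp: replace_col_def cols_mat_def col_def)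

lemma col_cols_mat: "M \<in> carrier_mat k n \<Longrightarrow> c < m \<Longrightarrow> col (cols_mat M g m) c = col M (g c)"
  by (auto intro!: eq_vecI simp: cols_mat_def col_def)

lemma pick_image_card: "finite K \<Longrightarrow> pick K ` {0..<card K} = K"
proof (intro equalityI subsetI)
  fix a assume "finite K" "a \<in> K"
  then have "card {b\<in>K. b < a} < card K" by (intro psubset_card_mono) auto
  then show "a \<in> pick K ` {0..<card K}" using pick_card_in_set[OF \<open>a \<in> K\<close>] by force
qed (auto intro: pick_in_set)

lemma inj_on_pick: "inj_on (pick K) {0..<card K}"
  unfolding inj_on_def by (metis atLeastLessThan_iff nat_neq_iff pick_mono)

lemma pick_atLeastLessThan: "i < k \<Longrightarrow> pick {0..<k} i = i"
  using pick_card_in_set[of i "{0..<k}"] by (simp add: Collect_conj_eq Int_absorb1 flip: lessThan_def)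

lemma submatrix_eq_cols_mat:
  assumes M: "M \<in> carrier_mat k n" and J: "J \<subseteq> {0..<n}" "card J = k"
  shows "submatrix M {0..<k} J = cols_mat M (pick J) k"
proof -
  have "card {i. i < dim_row M \<and> i < k} = k" "{j. j < dim_col M \<and> j \<in> J} = J"
    using M J by auto
  then show ?thesis
    using M J by (intro eq_matI) (auto simp: submatrix_def cols_mat_def pick_atLeastLessThan)
qed

text \<open>Any enumeration \<open>g\<close> of the column set \<open>J\<close> differs from the increasing one \<open>pick J\<close>
  by the permutation \<open>c \<mapsto> card {a \<in> J. a < g c}\<close>.\<close>
lemma det_cols_mat_sign:
  fixes M :: "'a::comm_ring_1 mat"
  assumes M: "M \<in> carrier_mat k n" and J: "J \<subseteq> {0..<n}" "card J = k"
    and g: "inj_on g {0..<k}" "g ` {0..<k} = J"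
  shows "\<exists>s \<in> {1, -1}. det (cols_mat M g k) = s * DeltaL M J"
proof -
  have fJ: "finite J" using J finite_subset by blast
  define p where "p c = (if c < k then card {a\<in>J. a < g c} else c)" for c
  have gJ: "c < k \<Longrightarrow> g c \<in> J" for c using g by auto
  have p_lt: "p c < k" if "c < k" for c
    using psubset_card_mono[OF fJ, of "{a\<in>J. a < g c}"] gJ[OF that] that J
    unfolding p_def by auto
  have pick_p: "pick J (p c) = g c" if "c < k" for c
    using pick_card_in_set[OF gJ[OF that]] that unfolding p_def by simp
  have "inj_on p {0..<k}"
    using g(1) by (intro inj_onI) (metis atLeastLessThan_iff inj_onD pick_p)
  moreover have "p ` {0..<k} = {0..<k}"
    by (rule endo_inj_surj) (use p_lt \<open>inj_on p {0..<k}\<close> in auto)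
  ultimately have perm: "p permutes {0..<k}"
    by (intro bij_imp_permutes) (auto simp: bij_betw_def p_def)
  define C where "C = cols_mat M (pick J) k"
  have C: "C \<in> carrier_mat k k" using M by (simp add: C_def cols_mat_carrier)
  have "transpose_mat (cols_mat M g k) = mat k k (\<lambda>(i,j). transpose_mat C $$ (p i, j))"
    by (rule eq_matI) (use M p_lt pick_p in \<open>auto simp: cols_mat_def C_def\<close>)
  then have "det (transpose_mat (cols_mat M g k)) = signof p * det (transpose_mat C)"
    using det_permute_rows[of "transpose_mat C" k p] C perm by simp
  moreover have "det (transpose_mat (cols_mat M g k)) = det (cols_mat M g k)"
    using det_transpose[OF cols_mat_carrier[OF M]] .
  moreover have "det C = DeltaL M J"
    unfolding DeltaL_def C_def using submatrix_eq_cols_mat[OF M J] M by simp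
  ultimately have "det (cols_mat M g k) = signof p * DeltaL M J"
    using det_transpose[OF C] by simp
  then show ?thesis by (auto simp: sign_def)
qed

definition DeltaL2 :: "'a::comm_ring_1 mat \<Rightarrow> nat set \<Rightarrow> nat \<Rightarrow> nat \<Rightarrow> 'a" where
  "DeltaL2 M K x y = DeltaL M (insert x (insert y K))"

definition DeltaR2 :: "'a::comm_ring_1 mat \<Rightarrow> nat set \<Rightarrow> nat \<Rightarrow> nat \<Rightarrow> 'a" where
  "DeltaR2 M K x y = DeltaR M (insert x (insert y K))"

lemma DeltaL2_commute: "DeltaL2 M K x y = DeltaL2 M K y x"
  unfolding DeltaL2_def by (simp add: insert_commute)

lemma DeltaR2_commute: "DeltaR2 M K x y = DeltaR2 M K y x"
  unfolding DeltaR2_def by (simp add: insert_commute)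

lemma DeltaL2_insert_swap: "DeltaL2 M (insert i T) s x = DeltaL2 M (insert s T) i x"
  unfolding DeltaL2_def by (simp add: insert_commute)

definition fresh :: "nat \<Rightarrow> nat set \<Rightarrow> nat list \<Rightarrow> bool" where
  "fresh n K xs \<longleftrightarrow> distinct xs \<and> set xs \<subseteq> {0..<n} - K"

lemma insert2_in_ksubsets:
  "K \<subseteq> {0..<n} \<Longrightarrow> card K + 2 = k \<Longrightarrow> fresh n K [x, y] \<Longrightarrow> insert x (insert y K) \<in> ksubsets k n"
  unfolding fresh_def ksubsets_def by (auto simp: card_insert_if finite_subset[of K "{0..<n}"])

definition enum2 :: "nat set \<Rightarrow> nat \<Rightarrow> nat \<Rightarrow> nat \<Rightarrow> nat \<Rightarrow> nat" where
  "enum2 K k u v c = (if c < k - 2 then pick K c else if c = k - 2 then u else if c = k - 1 then v else 0)"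

lemma enum2_bij:
  assumes K: "finite K" "card K + 2 = k" and uv: "u \<noteq> v" "u \<notin> K" "v \<notin> K"
  shows "inj_on (enum2 K k u v) {0..<k}" "enum2 K k u v ` {0..<k} = insert u (insert v K)"
proof -
  have pick_K: "c < k - 2 \<Longrightarrow> pick K c \<in> K" for c using pick_in_set K by auto
  show "inj_on (enum2 K k u v) {0..<k}"
  proof (rule inj_onI)
    fix c c' assume c: "c \<in> {0..<k}" "c' \<in> {0..<k}" "enum2 K k u v c = enum2 K k u v c'"
    show "c = c'"
    proof (cases "c < k - 2 \<and> c' < k - 2")
      case True
      then show ?thesis using c inj_on_pick[of K] K unfolding enum2_def by (auto simp: inj_on_def)
    next
      case False
      then show ?thesis using c pick_K uv unfolding enum2_def by (auto split: if_splits)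
    qed
  qed
  have "{0..<k} = {0..<card K} \<union> {k-2, k-1}" using K by auto
  moreover have "enum2 K k u v ` {0..<card K} = pick K ` {0..<card K}"
    using K by (intro image_cong) (auto simp: enum2_def)
  ultimately show "enum2 K k u v ` {0..<k} = insert u (insert v K)"
    using K pick_image_card[OF K(1)] by (auto simp: enum2_def)
qed

lemma enum2_update:
  assumes "2 \<le> k"
  shows "(enum2 K k u v)(k - 2 := y) = enum2 K k y v" "(enum2 K k u v)(k - 1 := y) = enum2 K k u y"
  using assms by (intro ext; auto simp: enum2_def)+

lemma col_cols_mat_enum2:
  assumes "M \<in> carrier_mat k n" "2 \<le> k"
  shows "col (cols_mat M (enum2 K k u v) k) (k - 2) = col M u"
    "col (cols_mat M (enum2 K k u v) k) (k - 1) = col M v"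
  using assms by (auto simp: col_cols_mat enum2_def)

lemma sign_mult: "a \<in> {1, -1} \<Longrightarrow> b \<in> {1, -1} \<Longrightarrow> (a :: 'a::comm_ring_1) * b \<in> {1, -1}"
  by auto

lemma sign_mult_cancel:
  fixes a :: "'a::comm_ring_1"
  assumes "a \<in> {1, -1}" "b \<in> {1, -1}" "a * b * x = y"
  shows "x = a * b * y"
  using assms by auto

lemma plucker_DeltaL2:
  fixes M :: "'a::comm_ring_1 mat"
  assumes M: "M \<in> carrier_mat k n" and K: "K \<subseteq> {0..<n}" "card K + 2 = k"
    and fresh: "fresh n K [w, x, y, z]"
  shows "\<exists>s1 \<in> {1, -1}. \<exists>s2 \<in> {1, -1}. DeltaL2 M K w x * DeltaL2 M K y z =
    s1 * (DeltaL2 M K z x * DeltaL2 M K y w) + s2 * (DeltaL2 M K w z * DeltaL2 M K y x)"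
proof -
  have fK: "finite K" using K finite_subset by blast
  have k2: "2 \<le> k" using K by simp
  define F where "F u v = det (cols_mat M (enum2 K k u v) k)" for u v
  have F_sign: "\<exists>s \<in> {1, -1}. F u v = s * DeltaL2 M K u v"
    if "u \<in> {w, x, y, z}" "v \<in> {w, x, y, z}" "u \<noteq> v" for u v
  proof -
    have uv: "u \<notin> K" "v \<notin> K" "insert u (insert v K) \<subseteq> {0..<n}" "card (insert u (insert v K)) = k"
      using that fresh K fK unfolding fresh_def by auto
    show ?thesis
      using det_cols_mat_sign[OF M uv(3,4) enum2_bij[OF fK K(2) that(3) uv(1,2)]]
      unfolding F_def DeltaL2_def by blast
  qed
  define A where "A = cols_mat M (enum2 K k w x) k"
  have A: "A \<in> carrier_mat k k" unfolding A_def using M by (rule cols_mat_carrier)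
  have p: "k - 2 < k" and q: "k - 1 < k" and pq: "k - 2 \<noteq> k - 1" using k2 by auto
  have col_M: "col M y \<in> carrier_vec k" "col M z \<in> carrier_vec k" using M by auto
  have F_plucker: "F w x * F y z = F z x * F y w + F w z * F y x"
    using det_replace_two_cols[OF A col_M p q pq]
    unfolding A_def F_def col_cols_mat_enum2[OF M k2] replace_col_cols_mat[OF M p] replace_col_cols_mat[OF M q]
      enum2_update[OF k2] .
  have dist: "w \<noteq> x" "y \<noteq> z" "z \<noteq> x" "y \<noteq> w" "w \<noteq> z" "y \<noteq> x"
    using fresh unfolding fresh_def by auto
  obtain a1 where a1: "a1 \<in> {1, -1}" "F w x = a1 * DeltaL2 M K w x"
    using F_sign[of w x] dist(1) by blast
  obtain a2 where a2: "a2 \<in> {1, -1}" "F y z = a2 * DeltaL2 M K y z"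
    using F_sign[of y z] dist(2) by blast
  obtain a3 where a3: "a3 \<in> {1, -1}" "F z x = a3 * DeltaL2 M K z x"
    using F_sign[of z x] dist(3) by blast
  obtain a4 where a4: "a4 \<in> {1, -1}" "F y w = a4 * DeltaL2 M K y w"
    using F_sign[of y w] dist(4) by blast
  obtain a5 where a5: "a5 \<in> {1, -1}" "F w z = a5 * DeltaL2 M K w z"
    using F_sign[of w z] dist(5) by blast
  obtain a6 where a6: "a6 \<in> {1, -1}" "F y x = a6 * DeltaL2 M K y x"
    using F_sign[of y x] dist(6) by blast
  have "a1 * a2 * (DeltaL2 M K w x * DeltaL2 M K y z) =
      (a3 * a4) * (DeltaL2 M K z x * DeltaL2 M K y w) + (a5 * a6) * (DeltaL2 M K w z * DeltaL2 M K y x)"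
    using F_plucker unfolding a1(2) a2(2) a3(2) a4(2) a5(2) a6(2) by (simp add: ac_simps)
  from sign_mult_cancel[OF a1(1) a2(1) this]
  have "DeltaL2 M K w x * DeltaL2 M K y z = (a1 * a2 * (a3 * a4)) * (DeltaL2 M K z x * DeltaL2 M K y w)
      + (a1 * a2 * (a5 * a6)) * (DeltaL2 M K w z * DeltaL2 M K y x)"
    by (simp add: distrib_left mult.assoc)
  then show ?thesis
    using sign_mult[OF sign_mult[OF a1(1) a2(1)] sign_mult[OF a3(1) a4(1)]]
      sign_mult[OF sign_mult[OF a1(1) a2(1)] sign_mult[OF a5(1) a6(1)]] by blast
qed

lemma DeltaR_eq_DeltaL_transpose:
  assumes R: "R \<in> carrier_mat n k" and J: "J \<subseteq> {0..<n}" "card J = k"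
  shows "DeltaR R J = DeltaL (transpose_mat R) J"
proof -
  have "{i. i < n \<and> i \<in> J} = J" using J by auto
  then have card: "card {i. i < n \<and> i \<in> J} = k" using J by simp
  have "pick J j < n" if "j < k" for j
    using pick_in_set[of j J] J that finite_subset[OF J(1)] by auto
  then have "transpose_mat (submatrix R J {0..<k}) = submatrix (transpose_mat R) {0..<k} J"
    using R by (intro eq_matI) (auto simp: submatrix_def card pick_atLeastLessThan)
  moreover have "submatrix R J {0..<k} \<in> carrier_mat k k"
    using R by (simp add: submatrix_def card)
  ultimately show ?thesis
    unfolding DeltaR_def DeltaL_def using R det_transpose by (metis carrier_matD(1,2) index_transpose_mat(2))
qed

lemma plucker_DeltaR2:
  fixes R :: "'a::comm_ring_1 mat"
  assumes R: "R \<in> carrier_mat n k" and K: "K \<subseteq> {0..<n}" "card K + 2 = k"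
    and fresh: "fresh n K [w, x, y, z]"
  shows "\<exists>s1 \<in> {1, -1}. \<exists>s2 \<in> {1, -1}. DeltaR2 R K w x * DeltaR2 R K y z =
    s1 * (DeltaR2 R K z x * DeltaR2 R K y w) + s2 * (DeltaR2 R K w z * DeltaR2 R K y x)"
proof -
  let ?T = "transpose_mat R"
  have DeltaR2_eq: "DeltaR2 R K u v = DeltaL2 ?T K u v"
    if "u \<in> {w, x, y, z}" "v \<in> {w, x, y, z}" "u \<noteq> v" for u v
  proof -
    have "fresh n K [u, v]" using fresh that unfolding fresh_def by auto
    then show ?thesis
      using DeltaR_eq_DeltaL_transpose[OF R] insert2_in_ksubsets[OF K]
      unfolding DeltaR2_def DeltaL2_def ksubsets_def by blast
  qed
  have "w \<noteq> x" "y \<noteq> z" "z \<noteq> x" "y \<noteq> w" "w \<noteq> z" "y \<noteq> x"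
    using fresh unfolding fresh_def by auto
  then have "DeltaR2 R K w x = DeltaL2 ?T K w x" "DeltaR2 R K y z = DeltaL2 ?T K y z"
    "DeltaR2 R K z x = DeltaL2 ?T K z x" "DeltaR2 R K y w = DeltaL2 ?T K y w"
    "DeltaR2 R K w z = DeltaL2 ?T K w z" "DeltaR2 R K y x = DeltaL2 ?T K y x"
    by (simp_all add: DeltaR2_eq)
  then show ?thesis
    using plucker_DeltaL2[OF transpose_carrier_mat[THEN iffD2, OF R] K fresh] by simp
qed

lemma pick_update_bij:
  assumes I: "finite I" "card I = k" and c: "c < k" and \<gamma>: "\<gamma> \<notin> I"
  shows "inj_on ((pick I)(c := \<gamma>)) {0..<k}"
    and "(pick I)(c := \<gamma>) ` {0..<k} = insert \<gamma> (I - {pick I c})"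
proof -
  let ?h = "(pick I)(c := \<gamma>)"
  have pick_I: "x < k \<Longrightarrow> pick I x \<in> I" for x using pick_in_set I by auto
  have inj: "inj_on (pick I) {0..<k}" using inj_on_pick[of I] I by simp
  show "inj_on ?h {0..<k}"
  proof (rule inj_onI)
    fix x y assume xy: "x \<in> {0..<k}" "y \<in> {0..<k}" "?h x = ?h y"
    show "x = y"
    proof (cases "x = c \<or> y = c")
      case True
      then show ?thesis using xy pick_I \<gamma> by (cases "x = c"; cases "y = c") auto
    next
      case False
      then show ?thesis using xy inj_onD[OF inj] by simp
    qed
  qed
  have "?h ` {0..<k} = insert \<gamma> (?h ` ({0..<k} - {c}))"
    using c by (metis atLeastLessThan_iff fun_upd_same image_insert insert_Diff zero_le)
  also have "?h ` ({0..<k} - {c}) = pick I ` ({0..<k} - {c})"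
    by (rule image_cong) auto
  also have "\<dots> = I - {pick I c}"
    using inj_on_image_set_diff[OF inj] pick_image_card[OF I(1)] c I by auto
  finally show "?h ` {0..<k} = insert \<gamma> (I - {pick I c})" .
qed

text \<open>Cramer's rule: the coordinates of column \<open>\<gamma>\<close> in the basis of the columns \<open>I\<close> are the
  exchanged minors, and they cannot all vanish unless column \<open>\<gamma>\<close> does.\<close>
lemma DeltaL_exchange_nonzero:
  fixes M :: "'a::idom mat"
  assumes M: "M \<in> carrier_mat k n" and I: "I \<in> ksubsets k n" and nz: "DeltaL M I \<noteq> 0"
    and \<gamma>: "\<gamma> < n" "\<gamma> \<notin> I" and col: "\<exists>r<k. M $$ (r, \<gamma>) \<noteq> 0"
  shows "\<exists>s\<in>I. DeltaL M (insert \<gamma> (I - {s})) \<noteq> 0"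
proof (rule ccontr)
  assume exchange_zero: "\<not> ?thesis"
  have Isub: "I \<subseteq> {0..<n}" and cI: "card I = k" using I unfolding ksubsets_def by simp_all
  have fI: "finite I" using Isub by (rule finite_subset) simp
  define A where "A = cols_mat M (pick I) k"
  have A: "A \<in> carrier_mat k k" unfolding A_def using M by (rule cols_mat_carrier)
  have det_A: "det A = DeltaL M I"
    using M unfolding DeltaL_def A_def by (simp add: submatrix_eq_cols_mat[OF M Isub cI])
  define b where "b = col M \<gamma>"
  have b: "b \<in> carrier_vec k" unfolding b_def using M by (intro carrier_vecI) simp
  have "(adj_mat A *\<^sub>v b) $ c = 0" if c: "c < k" for c
  proof -
    have J: "insert \<gamma> (I - {pick I c}) \<subseteq> {0..<n}" "card (insert \<gamma> (I - {pick I c})) = k"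
      using Isub \<gamma> fI cI c pick_in_set[of c I] by (auto simp: card_insert_if)
    obtain s where "det (cols_mat M ((pick I)(c := \<gamma>)) k) = s * DeltaL M (insert \<gamma> (I - {pick I c}))"
      using det_cols_mat_sign[OF M J pick_update_bij[OF fI cI c \<gamma>(2)]] by blast
    moreover have "pick I c \<in> I" using pick_in_set[of c I] fI cI c by simp
    ultimately show ?thesis
      using exchange_zero adj_mat_mult_vec_nth[OF A b c] replace_col_cols_mat[OF M c]
      unfolding A_def b_def by simp
  qed
  then have "adj_mat A *\<^sub>v b = 0\<^sub>v k" using adj_mat(1)[OF A] by (intro eq_vecI) simp_all
  then have "det A \<cdot>\<^sub>v b = 0\<^sub>v k"
    using det_smult_vec_eq_mult_adj[OF A b] A by (auto intro!: eq_vecI)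
  then have "b $ r = 0" if "r < k" for r
    using nz det_A that b by (metis index_smult_vec(1) index_zero_vec(1) carrier_vecD mult_eq_0_iff)
  then show False using col M \<gamma>(1) unfolding b_def by (auto simp: col_def)
qed

section \<open>Cross ratios of minors of \<open>R\<close>\<close>

lemma five_point_identity:
  fixes q_ab :: "'a::field"
  assumes nz: "q_ab \<noteq> 0" "q_ac \<noteq> 0" "q_ad \<noteq> 0" "q_ag \<noteq> 0" "q_bd \<noteq> 0" "q_bg \<noteq> 0"
    "q_cg \<noteq> 0" "q_dg \<noteq> 0"
    and bd: "q_bd * q_ag = s1 * (q_dg * q_ab) + s2 * (q_bg * q_ad)"
    and cd: "q_cd * q_ag = s3 * (q_dg * q_ac) + s4 * (q_cg * q_ad)"
  shows "q_ab * q_cd / (q_ac * q_bd) =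
    (s3 * (q_ab * q_dg / (q_ad * q_bg)) + s4 * (q_ab * q_cg / (q_ac * q_bg))) /
    (s1 * (q_ab * q_dg / (q_ad * q_bg)) + s2)"
proof -
  have den: "s1 * (q_ab * q_dg / (q_ad * q_bg)) + s2 = q_bd * q_ag / (q_bg * q_ad)"
    using bd nz by (simp add: field_simps)
  have num: "s3 * (q_ab * q_dg / (q_ad * q_bg)) + s4 * (q_ab * q_cg / (q_ac * q_bg)) =
      q_ab * q_cd * q_ag / (q_bg * q_ad * q_ac)"
    using cd nz by (simp add: field_simps)
  show ?thesis unfolding den num using nz by (simp add: field_simps)
qed

lemma swap1_insert2:
  assumes "i \<noteq> j" "i \<notin> S" "j \<notin> S" "x \<notin> insert i (insert j S)"
  shows "swap1 (insert i (insert j S)) i x = insert j (insert x S)"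
    "swap1 (insert i (insert j S)) j x = insert i (insert x S)"
  using assms unfolding swap1_def by auto

lemma swap2_insert2: "i \<notin> S \<Longrightarrow> j \<notin> S \<Longrightarrow> swap2 (insert i (insert j S)) i j x y = insert x (insert y S)"
  unfolding swap2_def by auto

locale minors_setting =
  fixes \<iota> :: "complex \<Rightarrow> 'a::field" and t :: "nat \<Rightarrow> 'a" and d k n :: nat and L R :: "'a mat"
  assumes setting: "setting \<iota> t d" and L: "L \<in> carrier_mat k n" and R: "R \<in> carrier_mat n k"
    and DeltaR_nonzero: "\<forall>J \<in> ksubsets k n. DeltaR R J \<noteq> 0"
    and hh_unit: "\<forall>J \<in> GG L k n. hh L R J \<in> Lam_units \<iota> t d"
begin

abbreviation Frac :: "'a set" where "Frac \<equiv> FracF \<iota> t d"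

definition codim2 :: "nat set \<Rightarrow> bool" where
  "codim2 K \<longleftrightarrow> K \<subseteq> {0..<n} \<and> card K + 2 = k"

lemma codim2_Diff:
  assumes "I \<in> ksubsets k n" "i \<in> I" "j \<in> I" "i \<noteq> j"
  shows "codim2 (I - {i, j})"
proof -
  have "finite I" "card I = k" "I \<subseteq> {0..<n}"
    using assms(1) finite_subset unfolding ksubsets_def by auto
  moreover have "card {i, j} \<le> card I" using assms(2-4) \<open>finite I\<close> by (intro card_mono) auto
  ultimately show ?thesis using assms(2-4) unfolding codim2_def by (auto simp: card_Diff_subset)
qed

definition cross_ratio :: "nat set \<Rightarrow> nat \<Rightarrow> nat \<Rightarrow> nat \<Rightarrow> nat \<Rightarrow> 'a" where
  "cross_ratio K a b c e = DeltaR2 R K a b * DeltaR2 R K c e / (DeltaR2 R K a c * DeltaR2 R K b e)"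

lemma cross_ratio_commute:
  "cross_ratio K a b c e = cross_ratio K c e a b" "cross_ratio K a b c e = cross_ratio K b a e c"
  unfolding cross_ratio_def by (simp_all add: DeltaR2_commute ac_simps)

lemma DeltaR2_nonzero: "codim2 K \<Longrightarrow> fresh n K [x, y] \<Longrightarrow> DeltaR2 R K x y \<noteq> 0"
  using DeltaR_nonzero insert2_in_ksubsets unfolding codim2_def DeltaR2_def by blast

lemma plucker_L:
  "codim2 K \<Longrightarrow> fresh n K [w, x, y, z] \<Longrightarrow> \<exists>s1 \<in> {1, -1}. \<exists>s2 \<in> {1, -1}.
    DeltaL2 L K w x * DeltaL2 L K y z =
    s1 * (DeltaL2 L K z x * DeltaL2 L K y w) + s2 * (DeltaL2 L K w z * DeltaL2 L K y x)"
  using plucker_DeltaL2[OF L] unfolding codim2_def by blast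

lemma plucker_R:
  "codim2 K \<Longrightarrow> fresh n K [w, x, y, z] \<Longrightarrow> \<exists>s1 \<in> {1, -1}. \<exists>s2 \<in> {1, -1}.
    DeltaR2 R K w x * DeltaR2 R K y z =
    s1 * (DeltaR2 R K z x * DeltaR2 R K y w) + s2 * (DeltaR2 R K w z * DeltaR2 R K y x)"
  using plucker_DeltaR2[OF R] unfolding codim2_def by blast

lemma cross_ratio_plucker:
  assumes K: "codim2 K" and fresh: "fresh n K [a, b, c, e]"
  shows "\<exists>s1 \<in> {1, -1}. \<exists>s2 \<in> {1, -1}. cross_ratio K a b c e = s1 + s2 * cross_ratio K a e c b"
proof -
  obtain s1 s2 where s: "s1 \<in> {1, -1}" "s2 \<in> {1, -1}" and rel:
    "DeltaR2 R K a b * DeltaR2 R K c e =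
     s1 * (DeltaR2 R K e b * DeltaR2 R K c a) + s2 * (DeltaR2 R K a e * DeltaR2 R K c b)"
    using plucker_R[OF K fresh] by blast
  have "DeltaR2 R K a c \<noteq> 0" "DeltaR2 R K b e \<noteq> 0"
    using DeltaR2_nonzero[OF K] fresh by (auto simp: fresh_def)
  then have "cross_ratio K a b c e = s1 + s2 * cross_ratio K a e c b"
    unfolding cross_ratio_def rel by (simp add: field_simps DeltaR2_commute)
  then show ?thesis using s by blast
qed

lemma cross_ratio_FracF_iff:
  assumes "codim2 K" "fresh n K [a, b, c, e]"
  shows "cross_ratio K a b c e \<in> Frac \<longleftrightarrow> cross_ratio K a e c b \<in> Frac"
proof -
  obtain s1 s2 where s: "s1 \<in> {1, -1}" "s2 \<in> {1, -1}"
    and rel: "cross_ratio K a b c e = s1 + s2 * cross_ratio K a e c b"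
    using cross_ratio_plucker[OF assms] by blast
  then have "cross_ratio K a e c b = s2 * (cross_ratio K a b c e - s1)"
    by (auto simp: algebra_simps)
  then show ?thesis
    using rel s FracF_sign[OF setting] FracF_add[OF setting] FracF_mult[OF setting]
      FracF_diff[OF setting] by metis
qed

text \<open>Where \<open>\<Delta>\<^sub>L\<close> does not vanish, \<open>\<Delta>\<^sub>R = h / \<Delta>\<^sub>L\<close> with \<open>h\<close> a unit of \<open>\<Lambda>\<close>, so monomial
  relations between \<open>\<Delta>\<^sub>L\<close>-minors transfer to \<open>\<Delta>\<^sub>R\<close>-minors modulo \<open>F\<close>.\<close>
lemma DeltaR_ratio_FracF:
  assumes J: "J1 \<in> ksubsets k n" "J2 \<in> ksubsets k n" "J3 \<in> ksubsets k n" "J4 \<in> ksubsets k n"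
    and nz: "DeltaL L J1 \<noteq> 0" "DeltaL L J2 \<noteq> 0" "DeltaL L J3 \<noteq> 0" "DeltaL L J4 \<noteq> 0"
    and s: "s \<in> {1, -1}" and rel: "DeltaL L J1 * DeltaL L J2 = s * (DeltaL L J3 * DeltaL L J4)"
  shows "DeltaR R J1 * DeltaR R J2 / (DeltaR R J3 * DeltaR R J4) \<in> Frac"
proof -
  have h: "hh L R J \<in> Frac" "hh L R J \<noteq> 0" if "J \<in> ksubsets k n" "DeltaL L J \<noteq> 0" for J
    using Lam_units_FracF[OF setting] hh_unit that unfolding GG_def by blast+
  have "DeltaR R J1 * DeltaR R J2 / (DeltaR R J3 * DeltaR R J4) =
      s * (hh L R J1 * hh L R J2 / (hh L R J3 * hh L R J4))"
    using rel nz s h[OF J(3) nz(3)] h[OF J(4) nz(4)] unfolding hh_def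
    by (auto simp: field_simps)
  then show ?thesis
    using h J nz FracF_sign[OF setting s] by (simp add: FracF_mult[OF setting] FracF_divide[OF setting])
qed

lemma cross_ratio_FracF_of_vanishing_pair:
  assumes K: "codim2 K" and fresh: "fresh n K [a, b, c, g]" and zero: "DeltaL2 L K a g = 0"
    and nz: "DeltaL2 L K a b \<noteq> 0" "DeltaL2 L K g b \<noteq> 0" "DeltaL2 L K a c \<noteq> 0"
  shows "cross_ratio K a b c g \<in> Frac"
proof -
  obtain s s' where s: "s \<in> {1, -1}" and "DeltaL2 L K a b * DeltaL2 L K c g =
      s * (DeltaL2 L K g b * DeltaL2 L K c a) + s' * (DeltaL2 L K a g * DeltaL2 L K c b)"
    using plucker_L[OF K fresh] by blast
  then have rel: "DeltaL2 L K a b * DeltaL2 L K c g = s * (DeltaL2 L K g b * DeltaL2 L K c a)"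
    using zero by simp
  then have "DeltaL2 L K c g \<noteq> 0" using s nz DeltaL2_commute[of L K c a] by auto
  have J: "insert x (insert y K) \<in> ksubsets k n" if "x \<in> set [a, b, c, g]" "y \<in> set [a, b, c, g]" "x \<noteq> y" for x y
    using insert2_in_ksubsets[of K n k x y] K fresh that unfolding codim2_def fresh_def by auto
  have "DeltaR2 R K a b * DeltaR2 R K c g / (DeltaR2 R K g b * DeltaR2 R K c a) \<in> Frac"
    using DeltaR_ratio_FracF[OF J J J J, of a b c g g b c a] rel s nz \<open>DeltaL2 L K c g \<noteq> 0\<close> fresh
      DeltaL2_commute[of L K c a]
    unfolding DeltaL2_def DeltaR2_def fresh_def by auto
  then show ?thesis unfolding cross_ratio_def by (simp add: DeltaR2_commute mult.commute)
qed

lemma cross_ratio_FracF_five_points: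
  assumes K: "codim2 K" and fresh: "fresh n K [a, b, c, e, g]"
    and "cross_ratio K a b e g \<in> Frac" "cross_ratio K a b c g \<in> Frac"
  shows "cross_ratio K a b c e \<in> Frac"
proof -
  have fresh4: "fresh n K [b, e, a, g]" "fresh n K [c, e, a, g]" using fresh by (auto simp: fresh_def)
  obtain s1 s2 where s12: "s1 \<in> {1, -1}" "s2 \<in> {1, -1}"
    "DeltaR2 R K b e * DeltaR2 R K a g = s1 * (DeltaR2 R K g e * DeltaR2 R K a b) + s2 * (DeltaR2 R K b g * DeltaR2 R K a e)"
    using plucker_R[OF K fresh4(1)] by blast
  obtain s3 s4 where s34: "s3 \<in> {1, -1}" "s4 \<in> {1, -1}"
    "DeltaR2 R K c e * DeltaR2 R K a g = s3 * (DeltaR2 R K g e * DeltaR2 R K a c) + s4 * (DeltaR2 R K c g * DeltaR2 R K a e)"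
    using plucker_R[OF K fresh4(2)] by blast
  have nz: "DeltaR2 R K a b \<noteq> 0" "DeltaR2 R K a c \<noteq> 0" "DeltaR2 R K a e \<noteq> 0" "DeltaR2 R K a g \<noteq> 0"
    "DeltaR2 R K b e \<noteq> 0" "DeltaR2 R K b g \<noteq> 0" "DeltaR2 R K c g \<noteq> 0" "DeltaR2 R K e g \<noteq> 0"
    using DeltaR2_nonzero[OF K] fresh by (auto simp: fresh_def)
  have "cross_ratio K a b c e =
      (s3 * cross_ratio K a b e g + s4 * cross_ratio K a b c g) / (s1 * cross_ratio K a b e g + s2)"
    unfolding cross_ratio_def
    by (rule five_point_identity[OF nz]) (use s12(3) s34(3) in \<open>simp_all add: DeltaR2_commute[of R K g e]\<close>)
  then show ?thesis
    using assms(3,4) s12 s34 FracF_sign[OF setting]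
    by (simp add: FracF_add[OF setting] FracF_mult[OF setting] FracF_divide[OF setting])
qed

lemma cross_ratio_FracF_of_vanishing:
  assumes K: "codim2 K" and fresh: "fresh n K [a, b, c, e, g]" and zero: "DeltaL2 L K a g = 0"
    and nz: "DeltaL2 L K a b \<noteq> 0" "DeltaL2 L K a c \<noteq> 0" "DeltaL2 L K a e \<noteq> 0" "DeltaL2 L K g b \<noteq> 0"
  shows "cross_ratio K a b c e \<in> Frac"
proof (rule cross_ratio_FracF_five_points[OF K fresh])
  show "cross_ratio K a b e g \<in> Frac" "cross_ratio K a b c g \<in> Frac"
    by (rule cross_ratio_FracF_of_vanishing_pair[OF K _ zero nz(1,4)];
        use fresh nz in \<open>auto simp: fresh_def\<close>)+
qed

lemma cross_ratio_exchange:
  assumes S: "codim2 (insert s T)" "s \<notin> T" and fresh: "fresh n (insert s T) [i, j, \<alpha>, \<beta>]"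
  shows "cross_ratio (insert s T) i \<beta> \<alpha> j =
    cross_ratio (insert i T) s \<beta> \<alpha> j / cross_ratio (insert j T) s \<beta> \<alpha> i"
proof -
  have Ki: "codim2 (insert i T)" and fresh_i: "fresh n (insert i T) [\<alpha>, j]" "fresh n (insert i T) [\<beta>, j]"
    using S fresh by (auto simp: codim2_def fresh_def card_insert_if finite_subset)
  have "DeltaR2 R (insert i T) \<alpha> j \<noteq> 0" "DeltaR2 R (insert i T) \<beta> j \<noteq> 0"
    using DeltaR2_nonzero[OF Ki fresh_i(1)] DeltaR2_nonzero[OF Ki fresh_i(2)] .
  moreover have "DeltaR2 R (insert s T) x y \<noteq> 0" if "x \<in> {i, j}" "y \<in> {\<alpha>, \<beta>}" for x y
    using DeltaR2_nonzero[OF S(1)] fresh that by (auto simp: fresh_def)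
  moreover have "DeltaR2 R (insert x T) s y = DeltaR2 R (insert s T) x y" for x y
    unfolding DeltaR2_def by (simp add: insert_commute)
  moreover have "DeltaR2 R (insert j T) y i = DeltaR2 R (insert i T) y j" for y
    unfolding DeltaR2_def by (simp add: insert_commute)
  ultimately show ?thesis
    unfolding cross_ratio_def by (simp add: field_simps DeltaR2_commute[of R _ _ j])
qed

lemma codim2_exchangeE:
  assumes S: "codim2 S" and fresh: "fresh n S [i, j, \<gamma>]" and col: "\<exists>r<k. L $$ (r, \<gamma>) \<noteq> 0"
    and zero: "DeltaL2 L S i \<gamma> = 0" "DeltaL2 L S j \<gamma> = 0" and nz: "DeltaL2 L S i j \<noteq> 0"
  obtains s T where "S = insert s T" "s \<notin> T" "DeltaL L (insert \<gamma> (insert i (insert j T))) \<noteq> 0"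
proof -
  let ?I = "insert i (insert j S)"
  have I: "?I \<in> ksubsets k n"
    using insert2_in_ksubsets[of S n k i j] S fresh unfolding codim2_def fresh_def by auto
  have \<gamma>: "\<gamma> < n" "\<gamma> \<notin> ?I" using fresh unfolding fresh_def by auto
  obtain s where s: "s \<in> ?I" "DeltaL L (insert \<gamma> (?I - {s})) \<noteq> 0"
    using DeltaL_exchange_nonzero[OF L I nz[unfolded DeltaL2_def] \<gamma> col] by blast
  have "s \<noteq> i"
  proof
    assume "s = i"
    then have "insert \<gamma> (?I - {s}) = insert j (insert \<gamma> S)" using fresh unfolding fresh_def by auto
    then show False using s(2) zero(2) unfolding DeltaL2_def by simp
  qed
  moreover have "s \<noteq> j"
  proof
    assume "s = j"
    then have "insert \<gamma> (?I - {s}) = insert i (insert \<gamma> S)" using fresh unfolding fresh_def by auto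
    then show False using s(2) zero(1) unfolding DeltaL2_def by simp
  qed
  ultimately have "S = insert s (S - {s})" "insert \<gamma> (?I - {s}) = insert \<gamma> (insert i (insert j (S - {s})))"
    using s(1) by auto
  then show thesis using that[of s "S - {s}"] s(2) by simp
qed

lemma cross_ratio_FracF_of_double_zero:
  assumes S: "codim2 S" and fresh: "fresh n S [i, j, \<alpha>, \<beta>, \<gamma>]"
    and col: "\<exists>r<k. L $$ (r, \<gamma>) \<noteq> 0"
    and zero: "DeltaL2 L S i \<gamma> = 0" "DeltaL2 L S j \<gamma> = 0"
    and nz: "DeltaL2 L S i j \<noteq> 0" "DeltaL2 L S i \<alpha> \<noteq> 0" "DeltaL2 L S i \<beta> \<noteq> 0"
      "DeltaL2 L S j \<alpha> \<noteq> 0" "DeltaL2 L S j \<beta> \<noteq> 0"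
  shows "cross_ratio S i \<beta> \<alpha> j \<in> Frac"
proof -
  have "fresh n S [i, j, \<gamma>]" using fresh unfolding fresh_def by auto
  then obtain s T where S_eq: "S = insert s T" and "s \<notin> T"
    and exch: "DeltaL L (insert \<gamma> (insert i (insert j T))) \<noteq> 0"
    using codim2_exchangeE[OF S _ col zero nz(1)] by blast
  have "s \<in> S" "s \<noteq> i" "s \<noteq> j" using fresh unfolding S_eq fresh_def by auto
  have fin_S: "finite S" using S finite_subset[of S "{0..<n}"] unfolding codim2_def by auto
  have T: "T \<subseteq> {0..<n}" "card T + 3 = k" "i \<notin> T" "j \<notin> T" "\<alpha> \<notin> T" "\<beta> \<notin> T" "\<gamma> \<notin> T"
    using S fresh fin_S \<open>s \<notin> T\<close> unfolding S_eq codim2_def fresh_def by auto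
  have fin_T: "finite T" using T(1) finite_subset by blast
  have exchanged: "DeltaL2 L (insert x T) \<gamma> y \<noteq> 0" if "x = i \<and> y = j \<or> x = j \<and> y = i" for x y
    using that exch unfolding DeltaL2_def by (elim disjE) (simp_all add: insert_commute[of j i])
  have K: "codim2 (insert x T)" "fresh n (insert x T) [s, y, \<alpha>, \<beta>, \<gamma>]"
    if "x = i \<and> y = j \<or> x = j \<and> y = i" for x y
  proof -
    have "x < n" "x \<notin> T" "y < n" "y \<notin> T" "x \<noteq> y" "s \<noteq> x" "s \<noteq> y"
      using that T fresh \<open>s \<noteq> i\<close> \<open>s \<noteq> j\<close> unfolding fresh_def by auto
    moreover have "s < n" "s \<notin> {\<alpha>, \<beta>, \<gamma>}"
      using S \<open>s \<in> S\<close> fresh unfolding codim2_def fresh_def by auto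
    ultimately show "codim2 (insert x T)" "fresh n (insert x T) [s, y, \<alpha>, \<beta>, \<gamma>]"
      using T fin_T fresh \<open>s \<notin> T\<close> that unfolding codim2_def fresh_def by auto
  qed
  have vanish: "cross_ratio (insert x T) s y \<alpha> \<beta> \<in> Frac" if xy: "x = i \<and> y = j \<or> x = j \<and> y = i" for x y
  proof (rule cross_ratio_FracF_of_vanishing[OF K[OF xy]])
    have swap: "DeltaL2 L (insert x T) s z = DeltaL2 L S x z" for z
      unfolding S_eq by (rule DeltaL2_insert_swap)
    show "DeltaL2 L (insert x T) s \<gamma> = 0"
      using xy zero unfolding swap by blast
    show "DeltaL2 L (insert x T) s y \<noteq> 0"
      using xy nz(1) DeltaL2_commute[of L S j i] unfolding swap by metis
    show "DeltaL2 L (insert x T) s \<alpha> \<noteq> 0" "DeltaL2 L (insert x T) s \<beta> \<noteq> 0"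
      using xy nz(2-5) unfolding swap by blast+
    show "DeltaL2 L (insert x T) \<gamma> y \<noteq> 0" using exchanged[OF xy] .
  qed
  have swapped: "cross_ratio (insert x T) s \<beta> \<alpha> y \<in> Frac" if xy: "x = i \<and> y = j \<or> x = j \<and> y = i" for x y
  proof -
    have "fresh n (insert x T) [s, y, \<alpha>, \<beta>]" using K(2)[OF xy] by (auto simp: fresh_def)
    then show ?thesis using vanish[OF xy] cross_ratio_FracF_iff[OF K(1)[OF xy]] by blast
  qed
  have fresh_sT: "fresh n (insert s T) [i, j, \<alpha>, \<beta>]"
    using fresh unfolding S_eq fresh_def by auto
  show ?thesis
    unfolding S_eq cross_ratio_exchange[OF S[unfolded S_eq] \<open>s \<notin> T\<close> fresh_sT]
    using swapped[of i j] swapped[of j i] by (simp add: FracF_divide[OF setting])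
qed

lemma DeltaL2_extension_nonzero:
  assumes S: "codim2 S" and fresh: "fresh n S [i, j, \<alpha>, \<beta>, \<gamma>]"
    and col: "\<exists>r<k. L $$ (r, \<gamma>) \<noteq> 0"
    and nz: "DeltaL2 L S i j \<noteq> 0" "DeltaL2 L S \<alpha> \<beta> \<noteq> 0" "DeltaL2 L S i \<alpha> \<noteq> 0"
      "DeltaL2 L S i \<beta> \<noteq> 0" "DeltaL2 L S j \<alpha> \<noteq> 0" "DeltaL2 L S j \<beta> \<noteq> 0"
    and irrational: "cross_ratio S i \<beta> \<alpha> j \<notin> Frac"
  shows "DeltaL2 L S i \<gamma> \<noteq> 0 \<and> DeltaL2 L S j \<gamma> \<noteq> 0 \<and> DeltaL2 L S \<alpha> \<gamma> \<noteq> 0"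
proof (rule ccontr)
  have fresh4: "fresh n S [i, j, \<alpha>, \<beta>]" using fresh by (simp add: fresh_def)
  assume "\<not> ?thesis"
  then consider (i) "DeltaL2 L S i \<gamma> = 0" "DeltaL2 L S j \<gamma> \<noteq> 0"
    | (j) "DeltaL2 L S j \<gamma> = 0" "DeltaL2 L S i \<gamma> \<noteq> 0"
    | (ij) "DeltaL2 L S i \<gamma> = 0" "DeltaL2 L S j \<gamma> = 0"
    | (\<alpha>) "DeltaL2 L S \<alpha> \<gamma> = 0" "DeltaL2 L S j \<gamma> \<noteq> 0"
    by blast
  then have "cross_ratio S i \<beta> \<alpha> j \<in> Frac"
  proof cases
    case i
    have "cross_ratio S i j \<alpha> \<beta> \<in> Frac"
      by (rule cross_ratio_FracF_of_vanishing[OF S _ i(1)])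
        (use fresh nz i(2) DeltaL2_commute[of L S \<gamma> j] in \<open>auto simp: fresh_def\<close>)
    then show ?thesis using cross_ratio_FracF_iff[OF S fresh4] by blast
  next
    case j
    have "cross_ratio S j i \<beta> \<alpha> \<in> Frac"
      by (rule cross_ratio_FracF_of_vanishing[OF S _ j(1)])
        (use fresh nz j(2) DeltaL2_commute[of L S \<gamma> i] DeltaL2_commute[of L S i j] in \<open>auto simp: fresh_def\<close>)
    then show ?thesis using cross_ratio_FracF_iff[OF S fresh4] cross_ratio_commute(2)[of S j i \<beta> \<alpha>] by simp
  next
    case \<alpha>
    have "cross_ratio S \<alpha> j i \<beta> \<in> Frac"
      by (rule cross_ratio_FracF_of_vanishing[OF S _ \<alpha>(1)])
        (use fresh nz \<alpha>(2) DeltaL2_commute[of L S \<gamma> j] DeltaL2_commute[of L S \<alpha>] in \<open>auto simp: fresh_def\<close>)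
    then show ?thesis using cross_ratio_commute(1)[of S \<alpha> j i \<beta>] by simp
  next
    case ij
    then show ?thesis using cross_ratio_FracF_of_double_zero[OF S fresh col] nz by blast
  qed
  with irrational show False ..
qed

lemma hh_insert2: "hh L R (insert x (insert y S)) = DeltaL2 L S x y * DeltaR2 R S x y"
  unfolding hh_def DeltaL2_def DeltaR2_def ..

lemma zero_notin_chi_iff:
  assumes S: "codim2 S" and fresh: "fresh n S [i, j, \<alpha>, \<gamma>]"
  shows "0 \<notin># chi L R (insert i (insert j S)) i j \<alpha> \<gamma> \<longleftrightarrow>
    DeltaL2 L S i j \<noteq> 0 \<and> DeltaL2 L S \<alpha> \<gamma> \<noteq> 0 \<and> DeltaL2 L S j \<alpha> \<noteq> 0 \<and>
    DeltaL2 L S i \<gamma> \<noteq> 0 \<and> DeltaL2 L S j \<gamma> \<noteq> 0 \<and> DeltaL2 L S i \<alpha> \<noteq> 0"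
proof -
  have "DeltaR2 R S x y \<noteq> 0" if "x \<in> {i, j, \<alpha>, \<gamma>}" "y \<in> {i, j, \<alpha>, \<gamma>}" "x \<noteq> y" for x y
    using DeltaR2_nonzero[OF S] fresh that unfolding fresh_def by auto
  moreover have "i \<noteq> j" "i \<notin> S" "j \<notin> S" "\<alpha> \<notin> insert i (insert j S)" "\<gamma> \<notin> insert i (insert j S)"
    "\<alpha> \<noteq> \<gamma>" "j \<noteq> \<alpha>" "i \<noteq> \<gamma>" "j \<noteq> \<gamma>" "i \<noteq> \<alpha>"
    using fresh unfolding fresh_def by auto
  ultimately show ?thesis
    unfolding chi_def by (simp add: swap1_insert2 swap2_insert2 hh_insert2)
qed

lemma Yterm_eq_cross_ratio:
  assumes fresh: "fresh n S [i, j, \<alpha>, \<beta>]"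
  shows "Yterm R (insert i (insert j S)) i j \<alpha> \<beta> =
    - of_int (sgn ((int i - int \<alpha>) * (int i - int \<beta>) * (int j - int \<alpha>) * (int j - int \<beta>)))
    * cross_ratio S i \<beta> \<alpha> j"
proof -
  have "i \<noteq> j" "i \<notin> S" "j \<notin> S" "\<alpha> \<notin> insert i (insert j S)" "\<beta> \<notin> insert i (insert j S)"
    using fresh unfolding fresh_def by auto
  then show ?thesis
    unfolding Yterm_def cross_ratio_def
    by (simp add: swap1_insert2 DeltaR2_def[symmetric] DeltaR2_commute[of R S \<alpha> j]
        DeltaR2_commute[of R S \<beta> j] ac_simps)
qed

lemma radical_insert2D:
  assumes S: "codim2 S" and fresh: "fresh n S [i, j, \<alpha>, \<beta>]"
    and radical: "radical \<iota> t d L R (insert i (insert j S)) i j \<alpha> \<beta>"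
  shows "DeltaL2 L S i j \<noteq> 0" "DeltaL2 L S \<alpha> \<beta> \<noteq> 0" "DeltaL2 L S i \<alpha> \<noteq> 0"
    "DeltaL2 L S i \<beta> \<noteq> 0" "DeltaL2 L S j \<alpha> \<noteq> 0" "DeltaL2 L S j \<beta> \<noteq> 0"
    and "cross_ratio S i \<beta> \<alpha> j \<notin> Frac"
proof -
  show "DeltaL2 L S i j \<noteq> 0" "DeltaL2 L S \<alpha> \<beta> \<noteq> 0" "DeltaL2 L S i \<alpha> \<noteq> 0"
    "DeltaL2 L S i \<beta> \<noteq> 0" "DeltaL2 L S j \<alpha> \<noteq> 0" "DeltaL2 L S j \<beta> \<noteq> 0"
    using radical zero_notin_chi_iff[OF S fresh] unfolding radical_def by auto
  show "cross_ratio S i \<beta> \<alpha> j \<notin> Frac"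
    using radical Yterm_eq_cross_ratio[OF fresh]
      FracF_mult[OF setting FracF_uminus[OF setting FracF_of_int[OF setting]]]
    unfolding radical_def by fastforce
qed

end

theorem mainTheorem4:
  fixes \<iota> :: "complex \<Rightarrow> 'a::alg_closed_field" and t :: "nat \<Rightarrow> 'a" and d k n :: nat
    and L R :: "'a mat" and I :: "nat set" and i j \<alpha> \<beta> :: nat
  assumes "setting \<iota> t d" and "d \<ge> 1" and "1 \<le> k" and "k \<le> n"
    and "L \<in> carrier_mat k n" and "R \<in> carrier_mat n k"
    and SA1: "\<forall>J \<in> ksubsets k n. DeltaR R J \<noteq> 0"
    and SA2: "\<forall>J \<in> GG L k n. hh L R J \<in> Lam_units \<iota> t d"
    and SA3: "\<forall>c<n. \<exists>r<k. L $$ (r, c) \<noteq> 0"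
    and "I \<in> ksubsets k n" and "i \<in> I" and "j \<in> I" and "i \<noteq> j"
    and "\<alpha> \<in> compl n I" and "\<beta> \<in> compl n I" and "\<alpha> \<noteq> \<beta>"
    and "radical \<iota> t d L R I i j \<alpha> \<beta>"
  shows "\<forall>\<gamma> \<in> compl n I. \<gamma> \<noteq> \<alpha> \<longrightarrow> 0 \<notin># chi L R I i j \<alpha> \<gamma>"
proof (intro ballI impI)
  fix \<gamma> assume \<gamma>: "\<gamma> \<in> compl n I" "\<gamma> \<noteq> \<alpha>"
  interpret minors_setting \<iota> t d k n L R
    using assms(1,5,6) SA1 SA2 by unfold_locales
  define S where "S = I - {i, j}"
  have I_eq: "I = insert i (insert j S)" using \<open>i \<in> I\<close> \<open>j \<in> I\<close> unfolding S_def by auto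
  have S: "codim2 S" unfolding S_def using codim2_Diff assms(10-13) .
  have fresh: "fresh n S [i, j, \<alpha>, \<beta>]" "fresh n S [i, j, \<alpha>, \<gamma>]"
    using assms(10-16) \<gamma> unfolding fresh_def S_def compl_def ksubsets_def by auto
  note radical = radical_insert2D[OF S fresh(1) assms(17)[unfolded I_eq]]
  show "0 \<notin># chi L R I i j \<alpha> \<gamma>"
  proof (cases "\<gamma> = \<beta>")
    case True
    then show ?thesis using assms(17) unfolding radical_def by simp
  next
    case False
    then have "fresh n S [i, j, \<alpha>, \<beta>, \<gamma>]" using fresh unfolding fresh_def by auto
    from DeltaL2_extension_nonzero[OF S this _ radical] show ?thesis
      unfolding I_eq zero_notin_chi_iff[OF S fresh(2)]
      using radical SA3 \<gamma>(1) unfolding compl_def by auto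
  qed
qed

end
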